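(* Let $\Theta$ be a set, let $\ell:\Theta\to\mathbb{R}$ and $R:\Theta\to\mathbb{R}$ be real-valued functions, let $B\ge 1$ be an integer, let $\theta^{(0)},\dots,\theta^{(B)}\in\Theta$ and let $\mu^{(0)},\dots,\mu^{(B)}$ be real numbers. Suppose that for all $k=0,\dots,B-1$, \[ \ell(\theta^{(k+1)}) + \mu^{(k+1)} R(\theta^{(k+1)}) \le \ell(\theta^{(k)}) + \mu^{(k+1)} R(\theta^{(k)}) \quad\text{and}\quad \mu^{(k+1)} > \mu^{(k)}. \] Define \begin{align*} \mathcal{K}_> &= \{k \in \{0,\dots,B-1\}: \ \ell(\theta^{(k+1)}) + \mu^{(k)} R(\theta^{(k+1)})\ge \ell(\theta^{(k)}) + \mu^{(k)} R(\theta^{(k)})\}, \\ \mathcal{K}_< &= \{0,\dots,B-1\} \setminus \mathcal{K}_>,\\ S_> &= \sum_{k \in \mathcal{K}_>} \mu^{(k+1)} \big(R(\theta^{(k)}) - R(\theta^{(k+1)})\big), \\ S_< &= \sum_{k \in \mathcal{K}_<} \mu^{(k)} \big(R(\theta^{(k)}) - R(\theta^{(k+1)})\big). \end{align*} Then \[ \ell(\theta^{(B)}) \le \ell(\theta^{(0)}) + S_> + S_<. \]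
   Context: Here $\ell$ plays the role of an empirical risk and $R$ a (one-dimensional) regularization loss of model parameters $\theta$; $\theta^{(k)}$ and $\mu^{(k)}$ are the model parameter and penalty multiplier at iteration $k$ of a training process minimizing the penalized loss $\ell(\theta)+\mu R(\theta)$. *)

theory Defs
  imports Main "HOL.Real"
begin

end

theory Submission
  imports Defs
begin

text \<open>Telescope \<open>l (\<theta> B) - l (\<theta> 0)\<close> over the steps. At every step the descent hypothesis
  for the multiplier \<open>\<mu> (k+1)\<close> bounds the increment of \<open>l\<close> by \<open>\<mu> (k+1) * (R (\<theta> k) - R (\<theta> (k+1)))\<close>;
  on the steps outside \<open>Kgt\<close> the penalized loss with the old multiplier \<open>\<mu> k\<close> decreases,
  which bounds the same increment by \<open>\<mu> k * (R (\<theta> k) - R (\<theta> (k+1)))\<close>.\<close>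

lemma diff_le_sum_of_increment_bounds:
  fixes a g :: "nat \<Rightarrow> 'b::ordered_ab_group_add"
  assumes "\<And>k. k < n \<Longrightarrow> a (Suc k) - a k \<le> g k"
  shows "a n - a 0 \<le> (\<Sum>k<n. g k)"
proof -
  have "a n - a 0 = (\<Sum>k<n. a (Suc k) - a k)"
    by (rule sum_lessThan_telescope [symmetric])
  also have "\<dots> \<le> (\<Sum>k<n. g k)"
    using assms by (intro sum_mono) simp
  finally show ?thesis .
qed

lemma penalized_descent_increment_le:
  fixes l l' r r' m m' :: real
  assumes "l' + m' * r' \<le> l + m' * r"
  shows "l' - l \<le> (if l' + m * r' \<ge> l + m * r then m' * (r - r') else m * (r - r'))"
  using assms by (auto simp: algebra_simps)

theorem corollary2:
  fixes l R :: "'a \<Rightarrow> real" and B :: nat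
    and \<theta> :: "nat \<Rightarrow> 'a" and \<mu> :: "nat \<Rightarrow> real"
  assumes "B \<ge> 1"
    and "\<And>k. k < B \<Longrightarrow>
           l (\<theta> (k+1)) + \<mu> (k+1) * R (\<theta> (k+1)) \<le> l (\<theta> k) + \<mu> (k+1) * R (\<theta> k)"
    and "\<And>k. k < B \<Longrightarrow> \<mu> (k+1) > \<mu> k"
  shows "let Kgt = {k \<in> {0..<B}. l (\<theta> (k+1)) + \<mu> k * R (\<theta> (k+1)) \<ge> l (\<theta> k) + \<mu> k * R (\<theta> k)};
             Klt = {0..<B} - Kgt;
             Sgt = (\<Sum>k\<in>Kgt. \<mu> (k+1) * (R (\<theta> k) - R (\<theta> (k+1))));
             Slt = (\<Sum>k\<in>Klt. \<mu> k * (R (\<theta> k) - R (\<theta> (k+1))))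
         in l (\<theta> B) \<le> l (\<theta> 0) + Sgt + Slt"
proof -
  define Kgt where "Kgt = {k \<in> {0..<B}. l (\<theta> (k+1)) + \<mu> k * R (\<theta> (k+1)) \<ge> l (\<theta> k) + \<mu> k * R (\<theta> k)}"
  have "l (\<theta> B) - l (\<theta> 0) \<le> (\<Sum>k<B. if k \<in> Kgt then \<mu> (k+1) * (R (\<theta> k) - R (\<theta> (k+1)))
                                     else \<mu> k * (R (\<theta> k) - R (\<theta> (k+1))))"
    using penalized_descent_increment_le [OF assms(2)]
    by (intro diff_le_sum_of_increment_bounds) (simp add: Kgt_def)
  also have "\<dots> = (\<Sum>k\<in>Kgt. \<mu> (k+1) * (R (\<theta> k) - R (\<theta> (k+1))))
                 + (\<Sum>k\<in>{0..<B} - Kgt. \<mu> k * (R (\<theta> k) - R (\<theta> (k+1))))"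
  proof -
    have "{..<B} \<inter> Kgt = Kgt"
      by (auto simp: Kgt_def)
    then show ?thesis
      by (simp add: sum.If_cases atLeast0LessThan Diff_eq)
  qed
  finally show ?thesis
    unfolding Kgt_def Let_def by linarith
qed

end
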